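(* Let $S=S(r_1,r_2,\ldots,r_k)$ be a starlike tree. Then: (1) if $r_i\geq 4$ for all $i$, then $GA(S)>ABC(S)$; (2) if $r_i\geq 2$ for all $i$ and $\frac{1}{k}\sum_{i=1}^{k}r_i\geq 4$, then $GA(S)>ABC(S)$; (3) if $\frac{1}{k}\sum_{i=1}^{k}r_i\geq 8$, then $GA(S)>ABC(S)$.
   Context: A starlike tree is a tree with exactly one vertex of degree greater than two. $S(r_1,\ldots,r_k)$ denotes the starlike tree having a vertex $v$ of degree $k>2$ such that deleting $v$ leaves the disjoint union of paths $P_{r_1}\cup\cdots\cup P_{r_k}$, where $P_r$ is the path on $r$ vertices and $r_1\geq r_2\geq\cdots\geq r_k\geq 1$ (so $S$ has $1+\sum r_i$ vertices). With $d_i$ the degree of vertex $v_i$, $GA(S)=\sum_{v_iv_j\in E(S)}\frac{2\sqrt{d_id_j}}{d_i+d_j}$ and $ABC(S)=\sum_{v_iv_j\in E(S)}\sqrt{\frac{d_i+d_j-2}{d_id_j}}$. *)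

theory Defs
  imports Complex_Main
begin

text \<open>A simple graph is given by its edge set: a set of two-element vertex sets.
  The degree of a vertex is the number of edges containing it.\<close>

definition deg :: "'a set set \<Rightarrow> 'a \<Rightarrow> nat" where
  "deg E v = card {e \<in> E. v \<in> e}"

definition GA :: "'a set set \<Rightarrow> real" where
  "GA E = (\<Sum>e\<in>E. 2 * sqrt (\<Prod>v\<in>e. real (deg E v)) / (\<Sum>v\<in>e. real (deg E v)))"

definition ABC :: "'a set set \<Rightarrow> real" where
  "ABC E = (\<Sum>e\<in>E. sqrt (((\<Sum>v\<in>e. real (deg E v)) - 2) / (\<Prod>v\<in>e. real (deg E v))))"

text \<open>The starlike tree S(r_1,...,r_k): centre (0,0); the i-th pendant path
  (1 \<le> i \<le> k) has vertices (i,1),...,(i,r_i), with (i,1) adjacent to the centre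
  and (i,j) adjacent to (i,j+1).\<close>
definition starlike_edges :: "nat \<Rightarrow> (nat \<Rightarrow> nat) \<Rightarrow> (nat \<times> nat) set set" where
  "starlike_edges k r =
     {{(0,0), (i,1)} | i. 1 \<le> i \<and> i \<le> k \<and> 1 \<le> r i} \<union>
     {{(i,j), (i,j+1)} | i j. 1 \<le> i \<and> i \<le> k \<and> 1 \<le> j \<and> j + 1 \<le> r i}"

end

theory Submission
  imports Defs
begin

text \<open>Write \<open>f(a,b)\<close> for the contribution of an edge with end degrees \<open>a, b\<close> to \<open>GA - ABC\<close>.
  Every pendant path of \<open>S\<close> meets the centre of degree \<open>k\<close> in one edge, ends in a leaf, and
  otherwise consists of edges between vertices of degree 2. With \<open>\<alpha> = 1/\<surd>2\<close> one has
  \<open>f(k,1) \<ge> -1\<close>, \<open>f(k,2) \<ge> -\<alpha>\<close>, \<open>f(2,1) = \<alpha>/3\<close> and \<open>f(2,2) = 1 - \<alpha>\<close>, so a path on \<open>n\<close>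
  vertices contributes at least \<open>n(1-\<alpha>) + \<alpha> - 2\<close>, and at least \<open>n(1-\<alpha>) - 2 + 4\<alpha>/3\<close> if
  \<open>n \<ge> 2\<close>. Summing over the \<open>k\<close> paths, a mean path length of 8 (resp. 4 with all paths of
  length at least 2) makes the total positive, because \<open>6 - 7\<alpha> > 0\<close> (resp. \<open>2 - 8\<alpha>/3 > 0\<close>).\<close>

definition edge_gap :: "real \<Rightarrow> real \<Rightarrow> real" where
  "edge_gap a b = 2 * sqrt (a * b) / (a + b) - sqrt ((a + b - 2) / (a * b))"

lemma GA_ABC_summand_doubleton:
  fixes d :: "'a \<Rightarrow> real"
  assumes "u \<noteq> v"
  shows "2 * sqrt (\<Prod>x\<in>{u, v}. d x) / (\<Sum>x\<in>{u, v}. d x)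
           - sqrt (((\<Sum>x\<in>{u, v}. d x) - 2) / (\<Prod>x\<in>{u, v}. d x))
         = edge_gap (d u) (d v)"
  using assms by (simp add: edge_gap_def)

definition path_parent :: "nat \<Rightarrow> nat \<Rightarrow> nat \<times> nat" where
  "path_parent i j = (if j = 1 then (0, 0) else (i, j - 1))"

definition parent_edge :: "nat \<times> nat \<Rightarrow> (nat \<times> nat) set" where
  "parent_edge w = {path_parent (fst w) (snd w), w}"

definition path_vertices :: "nat \<Rightarrow> (nat \<Rightarrow> nat) \<Rightarrow> (nat \<times> nat) set" where
  "path_vertices k r = Sigma {1..k} (\<lambda>i. {1..r i})"

lemma starlike_edges_eq_image:
  "starlike_edges k r = parent_edge ` path_vertices k r"
proof
  show "starlike_edges k r \<subseteq> parent_edge ` path_vertices k r"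
  proof
    fix e assume "e \<in> starlike_edges k r"
    then consider (centre) i where "e = {(0, 0), (i, 1)}" "1 \<le> i" "i \<le> k" "1 \<le> r i"
      | (path) i j where "e = {(i, j), (i, j + 1)}" "1 \<le> i" "i \<le> k" "1 \<le> j" "j + 1 \<le> r i"
      unfolding starlike_edges_def by blast
    then show "e \<in> parent_edge ` path_vertices k r"
    proof cases
      case centre
      then have "e = parent_edge (i, 1)" "(i, 1) \<in> path_vertices k r"
        by (simp_all add: parent_edge_def path_parent_def path_vertices_def)
      then show ?thesis by blast
    next
      case path
      then have "e = parent_edge (i, j + 1)" "(i, j + 1) \<in> path_vertices k r"
        by (auto simp: parent_edge_def path_parent_def path_vertices_def)
      then show ?thesis by blast
    qed
  qed
next
  show "parent_edge ` path_vertices k r \<subseteq> starlike_edges k r"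
  proof
    fix e assume "e \<in> parent_edge ` path_vertices k r"
    then obtain i j where ij: "e = parent_edge (i, j)" "1 \<le> i" "i \<le> k" "1 \<le> j" "j \<le> r i"
      by (auto simp: path_vertices_def)
    show "e \<in> starlike_edges k r"
    proof (cases "j = 1")
      case True
      then have "e = {(0, 0), (i, 1)}" using ij by (simp add: parent_edge_def path_parent_def)
      then show ?thesis using ij True unfolding starlike_edges_def by blast
    next
      case False
      then have "e = {(i, j - 1), (i, (j - 1) + 1)}" "1 \<le> j - 1" "j - 1 + 1 \<le> r i"
        using ij by (auto simp: parent_edge_def path_parent_def)
      then show ?thesis using ij unfolding starlike_edges_def by blast
    qed
  qed
qed

lemma path_parent_neq: "1 \<le> j \<Longrightarrow> path_parent i j \<noteq> (i, j)"
  by (auto simp: path_parent_def)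

lemma inj_on_parent_edge: "inj_on parent_edge (path_vertices k r)"
proof (rule inj_onI)
  fix w w' assume w: "w \<in> path_vertices k r" "w' \<in> path_vertices k r"
    and eq: "parent_edge w = parent_edge w'"
  obtain i j i' j' where ij: "w = (i, j)" "1 \<le> j" "w' = (i', j')" "1 \<le> j'"
    using w by (auto simp: path_vertices_def)
  show "w = w'"
  proof (rule ccontr)
    assume "w \<noteq> w'"
    moreover have "w \<in> parent_edge w'" "w' \<in> parent_edge w"
      using eq by (auto simp: parent_edge_def)
    ultimately have "(i, j) = path_parent i' j'" "(i', j') = path_parent i j"
      using ij by (auto simp: parent_edge_def)
    then show False using ij by (auto simp: path_parent_def split: if_splits)
  qed
qed

lemma deg_starlike_eq_card:
  "deg (starlike_edges k r) v = card {w \<in> path_vertices k r. v \<in> parent_edge w}"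
proof -
  have "{e \<in> starlike_edges k r. v \<in> e} = parent_edge ` {w \<in> path_vertices k r. v \<in> parent_edge w}"
    by (auto simp: starlike_edges_eq_image)
  moreover have "inj_on parent_edge {w \<in> path_vertices k r. v \<in> parent_edge w}"
    using inj_on_parent_edge by (rule inj_on_subset) auto
  ultimately show ?thesis by (simp add: deg_def card_image)
qed

lemma deg_starlike_centre:
  assumes "\<And>i. 1 \<le> i \<Longrightarrow> i \<le> k \<Longrightarrow> r i \<ge> 1"
  shows "deg (starlike_edges k r) (0, 0) = k"
proof -
  have "{w \<in> path_vertices k r. (0, 0) \<in> parent_edge w} = (\<lambda>i. (i, 1)) ` {1..k}"
    using assms by (auto simp: path_vertices_def parent_edge_def path_parent_def split: if_splits)
  moreover have "inj_on (\<lambda>i::nat. (i, 1::nat)) {1..k}" by (auto intro: inj_onI)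
  ultimately show ?thesis by (simp add: deg_starlike_eq_card card_image)
qed

lemma deg_starlike_path_vertex:
  assumes "(i, j) \<in> path_vertices k r"
  shows "deg (starlike_edges k r) (i, j) = (if j < r i then 2 else 1)"
proof -
  have "{w \<in> path_vertices k r. (i, j) \<in> parent_edge w}
        = insert (i, j) (if j < r i then {(i, j + 1)} else {})"
    using assms by (auto simp: path_vertices_def parent_edge_def path_parent_def split: if_splits)
  then show ?thesis by (simp add: deg_starlike_eq_card)
qed

definition branch_gap :: "real \<Rightarrow> nat \<Rightarrow> real" where
  "branch_gap d n = (\<Sum>j\<in>{1..n}. edge_gap (if j = 1 then d else 2) (if j < n then 2 else 1))"

lemma GA_minus_ABC_starlike:
  assumes "\<And>i. 1 \<le> i \<Longrightarrow> i \<le> k \<Longrightarrow> r i \<ge> 1"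
  shows "GA (starlike_edges k r) - ABC (starlike_edges k r) = (\<Sum>i\<in>{1..k}. branch_gap k (r i))"
proof -
  let ?E = "starlike_edges k r"
  let ?d = "\<lambda>v. real (deg ?E v)"
  let ?f = "\<lambda>e. 2 * sqrt (\<Prod>v\<in>e. ?d v) / (\<Sum>v\<in>e. ?d v)
      - sqrt (((\<Sum>v\<in>e. ?d v) - 2) / (\<Prod>v\<in>e. ?d v))"
  have "GA ?E - ABC ?E = (\<Sum>e\<in>parent_edge ` path_vertices k r. ?f e)"
    by (simp add: GA_def ABC_def sum_subtractf starlike_edges_eq_image)
  also have "\<dots> = (\<Sum>w\<in>path_vertices k r. ?f (parent_edge w))"
    by (rule sum.reindex[OF inj_on_parent_edge, unfolded comp_def])
  also have "\<dots> = (\<Sum>(i, j)\<in>path_vertices k r.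
      edge_gap (if j = 1 then real k else 2) (if j < r i then 2 else 1))"
  proof (rule sum.cong[OF refl], clarify)
    fix i j assume ij: "(i, j) \<in> path_vertices k r"
    have parent_deg: "?d (path_parent i j) = (if j = 1 then real k else 2)"
    proof (cases "j = 1")
      case False
      then have "(i, j - 1) \<in> path_vertices k r" "j - 1 < r i"
        using ij by (auto simp: path_vertices_def)
      then show ?thesis using False by (simp add: path_parent_def deg_starlike_path_vertex)
    qed (simp add: path_parent_def deg_starlike_centre[OF assms])
    have "path_parent i j \<noteq> (i, j)"
      using ij by (intro path_parent_neq) (simp add: path_vertices_def)
    then show "?f (parent_edge (i, j))
        = edge_gap (if j = 1 then real k else 2) (if j < r i then 2 else 1)"
      unfolding parent_edge_def fst_conv snd_conv
      by (subst GA_ABC_summand_doubleton) (simp_all add: parent_deg deg_starlike_path_vertex[OF ij])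
  qed
  also have "\<dots> = (\<Sum>i\<in>{1..k}. branch_gap k (r i))"
    by (simp add: path_vertices_def sum.Sigma branch_gap_def)
  finally show ?thesis .
qed

lemma sqrt_half_lt: "sqrt (1/2) < (3/4 :: real)"
proof -
  have "sqrt (1/2::real) < sqrt ((3/4)\<^sup>2)" by (simp add: power2_eq_square)
  then show ?thesis by simp
qed

lemma edge_gap_leaf_ge:
  assumes "d \<ge> 1"
  shows "edge_gap d 1 \<ge> -1"
proof -
  have "edge_gap d 1 = 2 * sqrt d / (d + 1) - sqrt ((d - 1) / d)"
    by (simp add: edge_gap_def)
  moreover have "sqrt ((d - 1) / d) \<le> 1" "2 * sqrt d / (d + 1) \<ge> 0" using assms by simp_all
  ultimately show ?thesis by linarith
qed

lemma edge_gap_two_ge: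
  assumes "d > 0"
  shows "edge_gap d 2 \<ge> - sqrt (1/2)"
proof -
  have "(d + 2 - 2) / (d * 2) = 1/2" "2 * sqrt (d * 2) / (d + 2) \<ge> 0" using assms by simp_all
  then show ?thesis by (simp add: edge_gap_def)
qed

lemma edge_gap_2_1: "edge_gap 2 1 = sqrt (1/2) / 3"
proof -
  have "sqrt 2 = 2 * sqrt (1/2::real)"
    by (simp flip: real_sqrt_mult[of 4 "1/2", simplified])
  then show ?thesis by (simp add: edge_gap_def)
qed

lemma edge_gap_2_2: "edge_gap 2 2 = 1 - sqrt (1/2)"
  by (simp add: edge_gap_def real_sqrt_eq_iff)

lemma branch_gap_long_ge:
  assumes "d > 0" "n \<ge> 2"
  shows "branch_gap d n \<ge> real n * (1 - sqrt (1/2)) - 2 + 4 * sqrt (1/2) / 3"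
proof -
  have "{1..n} = insert 1 (insert n {2..<n})" using assms by auto
  then have "branch_gap d n = edge_gap d 2 + edge_gap 2 1 + (\<Sum>j\<in>{2..<n}. edge_gap 2 2)"
    using assms unfolding branch_gap_def by (simp add: add.assoc)
  also have "\<dots> = edge_gap d 2 + sqrt (1/2) / 3 + (real n - 2) * (1 - sqrt (1/2))"
    using assms by (simp add: edge_gap_2_1 edge_gap_2_2 of_nat_diff)
  finally show ?thesis
    using edge_gap_two_ge[OF assms(1)] by (simp add: algebra_simps)
qed

lemma branch_gap_ge:
  assumes "d \<ge> 1" "n \<ge> 1"
  shows "branch_gap d n \<ge> real n * (1 - sqrt (1/2)) + sqrt (1/2) - 2"
proof (cases "n = 1")
  case True
  then show ?thesis using edge_gap_leaf_ge[OF assms(1)] by (simp add: branch_gap_def)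
next
  case False
  then have "branch_gap d n \<ge> real n * (1 - sqrt (1/2)) - 2 + 4 * sqrt (1/2) / 3"
    using assms by (intro branch_gap_long_ge) auto
  moreover have "sqrt (1/2) \<ge> (0::real)" by simp
  ultimately show ?thesis by linarith
qed

lemma sum_affine_lower_bound:
  fixes f g :: "'a \<Rightarrow> real"
  assumes "\<And>i. i \<in> A \<Longrightarrow> g i \<ge> c * f i + b"
  shows "(\<Sum>i\<in>A. g i) \<ge> c * (\<Sum>i\<in>A. f i) + real (card A) * b"
proof -
  have "(\<Sum>i\<in>A. c * f i + b) \<le> (\<Sum>i\<in>A. g i)" by (rule sum_mono) (rule assms)
  then show ?thesis by (simp add: sum.distrib sum_distrib_left)
qed

lemma starlike_GA_gt_ABC_mean_8:
  assumes "k > 0" "\<And>i. 1 \<le> i \<Longrightarrow> i \<le> k \<Longrightarrow> r i \<ge> 1"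
    and mean: "(\<Sum>i=1..k. real (r i)) / real k \<ge> 8"
  shows "GA (starlike_edges k r) > ABC (starlike_edges k r)"
proof -
  let ?\<alpha> = "sqrt (1/2) :: real"
  have "(\<Sum>i=1..k. branch_gap k (r i))
        \<ge> (1 - ?\<alpha>) * (\<Sum>i=1..k. real (r i)) + real (card {1..k}) * (?\<alpha> - 2)"
    using assms branch_gap_ge[of k] by (intro sum_affine_lower_bound) (auto simp: algebra_simps)
  moreover have "(1 - ?\<alpha>) * (\<Sum>i=1..k. real (r i)) \<ge> (1 - ?\<alpha>) * (8 * real k)"
    using mean sqrt_half_lt \<open>k > 0\<close> by (intro mult_left_mono) (auto simp: field_simps)
  moreover have "real k * (6 - 7 * ?\<alpha>) > 0" using \<open>k > 0\<close> sqrt_half_lt by simp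
  ultimately show ?thesis
    using GA_minus_ABC_starlike[OF assms(2)] by (simp add: algebra_simps)
qed

lemma starlike_GA_gt_ABC_mean_4:
  assumes "k > 0" "\<And>i. 1 \<le> i \<Longrightarrow> i \<le> k \<Longrightarrow> r i \<ge> 2"
    and mean: "(\<Sum>i=1..k. real (r i)) / real k \<ge> 4"
  shows "GA (starlike_edges k r) > ABC (starlike_edges k r)"
proof -
  let ?\<alpha> = "sqrt (1/2) :: real"
  have "(\<Sum>i=1..k. branch_gap k (r i))
        \<ge> (1 - ?\<alpha>) * (\<Sum>i=1..k. real (r i)) + real (card {1..k}) * (4 * ?\<alpha> / 3 - 2)"
    using assms branch_gap_long_ge[of k] by (intro sum_affine_lower_bound) (auto simp: algebra_simps)
  moreover have "(1 - ?\<alpha>) * (\<Sum>i=1..k. real (r i)) \<ge> (1 - ?\<alpha>) * (4 * real k)"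
    using mean sqrt_half_lt \<open>k > 0\<close> by (intro mult_left_mono) (auto simp: field_simps)
  moreover have "real k * (2 - 8 * ?\<alpha> / 3) > 0" using \<open>k > 0\<close> sqrt_half_lt by simp
  moreover have "\<And>i. 1 \<le> i \<Longrightarrow> i \<le> k \<Longrightarrow> r i \<ge> 1" using assms(2) by force
  ultimately show ?thesis
    using GA_minus_ABC_starlike[of k r] by (simp add: algebra_simps)
qed

theorem theorem3p9:
  fixes k :: nat and r :: "nat \<Rightarrow> nat"
  assumes "k > 2"
    and "\<And>i. 1 \<le> i \<Longrightarrow> i \<le> k \<Longrightarrow> r i \<ge> 1"
    and "\<And>i j. 1 \<le> i \<Longrightarrow> i \<le> j \<Longrightarrow> j \<le> k \<Longrightarrow> r j \<le> r i"
  shows "((\<forall>i\<in>{1..k}. r i \<ge> 4) \<longrightarrow>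
            GA (starlike_edges k r) > ABC (starlike_edges k r))
       \<and> ((\<forall>i\<in>{1..k}. r i \<ge> 2) \<and> (\<Sum>i=1..k. real (r i)) / real k \<ge> 4 \<longrightarrow>
            GA (starlike_edges k r) > ABC (starlike_edges k r))
       \<and> ((\<Sum>i=1..k. real (r i)) / real k \<ge> 8 \<longrightarrow>
            GA (starlike_edges k r) > ABC (starlike_edges k r))"
proof -
  have "k > 0" using assms(1) by simp
  have part2: "GA (starlike_edges k r) > ABC (starlike_edges k r)"
    if "\<forall>i\<in>{1..k}. r i \<ge> 2" "(\<Sum>i=1..k. real (r i)) / real k \<ge> 4"
    using starlike_GA_gt_ABC_mean_4[OF \<open>k > 0\<close>] that by auto
  have "(\<Sum>i=1..k. real (r i)) / real k \<ge> 4" if "\<forall>i\<in>{1..k}. r i \<ge> 4"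
  proof -
    have "(\<Sum>i=1..k. real (r i)) \<ge> (\<Sum>i=1..k. 4)" using that by (intro sum_mono) auto
    then show ?thesis using \<open>k > 0\<close> by (simp add: field_simps)
  qed
  then have part1: "GA (starlike_edges k r) > ABC (starlike_edges k r)"
    if "\<forall>i\<in>{1..k}. r i \<ge> 4"
    using part2 that by force
  show ?thesis
    using part1 part2 starlike_GA_gt_ABC_mean_8[of k r] \<open>k > 0\<close> assms(2) by blast
qed

end
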